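(* Let $\mathbf{T}$ be a $\sigma$-structure, $\mathbf{A}$ an instance of $\mathrm{CSP}(\mathbf{T})$, $\mathbb{F}$ a field, $D\ge1$, and $R$ a degree-$D$ pseudo-reduction operator for $P_{\mathbf{A}\to\mathbf{T}}$. Then for every $k\le D$ the collection $\kappa_R=\{\kappa_R(X):X\subseteq A,|X|\le k\}$, where $\kappa_R(X)=\{\varphi\in\mathrm{Hom}(\mathbf{A}[X],\mathbf{T}):R(m_\varphi)\ne0\}$, is $k$-consistent with all $\kappa_R(X)$ nonempty. Moreover, if $\mathbb{F}$ has characteristic $0$ and $R$ is integral, then for every $\mathbb{Z}$-linear map $h:\mathbb{Z}[\mathbf{x}_{A,T}]\to\mathbb{Z}$ with $h(1)=1$, the assignment $x_{X,\varphi}:=h(R(m_\varphi))$ for all $X\subseteq A$ with $|X|\le D$ and $\varphi\in\mathrm{Hom}(\mathbf{A}[X],\mathbf{T})$ is an integer solution of $L_D(\mathbf{A},\mathbf{T},\kappa_R)$ (and, restricted to $|X|\le k$, of $L_k(\mathbf{A},\mathbf{T},\kappa_R)$ for all $k\le D$). Consequently, if a degree-$D$ integral pseudo-reduction operator for $P_{\mathbf{A}\to\mathbf{T}}$ exists, the $\mathbb{Z}$-affine $k$-consistency algorithm for $\mathrm{CSP}(\mathbf{T})$ accepts $\mathbf{A}$ for all $k\le D$.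
   Context: Relational structures: a signature $\sigma$ is a finite set of relation symbols with arities; a $\sigma$-structure $\mathbf{A}$ has a finite domain $A$ and relations $\Gamma^{\mathbf{A}}\subseteq A^{\mathrm{ar}(\Gamma)}$; a homomorphism maps tuples of $\Gamma^{\mathbf{A}}$ into $\Gamma^{\mathbf{T}}$. An instance of $\mathrm{CSP}(\mathbf{T})$ is a $\sigma$-structure no tuple of whose relations has repeated entries. For $X\subseteq A$, $\mathbf{A}[X]$ is the substructure on $X$ (tuples with all entries in $X$), and $\mathrm{Hom}(\mathbf{A}[X],\mathbf{T})$ its set of homomorphisms to $\mathbf{T}$. Polynomial encoding: $\mathbb{F}[\mathbf{x}_{A,T}]$ is the polynomial ring in variables $x_{a,i}$ ($a\in A,i\in T$). $P_{\mathbf{A}\to\mathbf{T}}$ consists of: $\sum_{i\in T}x_{a,i}-1$ for $a\in A$; $x_{a,i}x_{a,i'}$ for $a\in A$, $i\ne i'$; for each $\Gamma\in\sigma$, $(a_1,\dots,a_r)\in\Gamma^{\mathbf{A}}$ and $(c_1,\dots,c_r)\in T^r\setminus\Gamma^{\mathbf{T}}$, the monomial $\prod_jx_{a_j,c_j}$; and $x_{a,i}^2-x_{a,i}$. For a partial map $\varphi:A\to T$, $m_\varphi=\prod_{a\in\mathrm{dom}\varphi}x_{a,\varphi(a)}$ (so $m_\emptyset=1$). A degree-$D$ pseudo-reduction operator for a set $\mathcal{P}\subseteq\mathbb{F}[x_1,\dots,x_n]$ is an $\mathbb{F}$-linear map $R$ on $\mathbb{F}[x_1,\dots,x_n]$ with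 (1) $R(1)=1$, (2) $R(p)=0$ for all $p\in\mathcal{P}$, (3) $R(x_im)=R(x_iR(m))$ for every monomial $m$ of degree at most $D-1$ and every variable $x_i$. When $\mathbb{F}$ has characteristic $0$ (so $\mathbb{Z}\subseteq\mathbb{F}$), $R$ is integral if $R(m)\in\mathbb{Z}[x_1,\dots,x_n]$ for every monomial $m$. $k$-consistency: a collection $\kappa=\{\kappa(X):X\subseteq A,|X|\le k\}$ with $\kappa(X)\subseteq\mathrm{Hom}(\mathbf{A}[X],\mathbf{T})$ is $k$-consistent if for all $Y\subseteq X$, $|X|\le k$: every $\varphi\in\kappa(Y)$ is the restriction of some $\psi\in\kappa(X)$, and every $\psi\in\kappa(X)$ restricts to an element of $\kappa(Y)$. $L_k(\mathbf{A},\mathbf{T},\kappa)$ is the system in variables $x_{X,\varphi}$ ($|X|\le k$, $\varphi\in\mathrm{Hom}(\mathbf{A}[X],\mathbf{T})$): $\sum_{\varphi\in\kappa(X)}x_{X,\varphi}=1$ for each $|X|\le k$, and $\sum_{\varphi\in\kappa(X),\varphi|_Y=\psi}x_{X,\varphi}=x_{Y,\psi}$ for all $Y\subseteq X$, $|X|\le k$, $\psi\in\kappa(Y)$. The $\mathbb{Z}$-affine $k$-consistency algorithm for $\mathrm{CSP}(\mathbf{T})$ accepts $\mathbf{A}$ iff there is a $k$-consistent collection $\kappa$ with all $\kappa(X)$ nonempty such that $L_k(\mathbf{A},\mathbf{T},\kappa)$ has a solution over $\mathbb{Z}$. *)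

theory Defs
  imports Main "HOL-Library.Poly_Mapping"
begin

definition is_structure :: "'s set \<Rightarrow> ('s \<Rightarrow> nat) \<Rightarrow> 'a set \<Rightarrow> ('s \<Rightarrow> 'a list set) \<Rightarrow> bool" where
  "is_structure sig ar A RA \<longleftrightarrow> finite sig \<and> finite A \<and>
     (\<forall>\<Gamma>\<in>sig. \<forall>t\<in>RA \<Gamma>. length t = ar \<Gamma> \<and> set t \<subseteq> A)"

definition is_instance :: "'s set \<Rightarrow> ('s \<Rightarrow> nat) \<Rightarrow> 'a set \<Rightarrow> ('s \<Rightarrow> 'a list set) \<Rightarrow> bool" where
  "is_instance sig ar A RA \<longleftrightarrow> is_structure sig ar A RA \<and> (\<forall>\<Gamma>\<in>sig. \<forall>t\<in>RA \<Gamma>. distinct t)"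

text \<open>Hom(A[X],T): partial maps with domain exactly X, values in T, mapping every tuple of
  the substructure A[X] (tuples with all entries in X) into the corresponding relation of T.\<close>
definition Hom_sub :: "'s set \<Rightarrow> 'a set \<Rightarrow> ('s \<Rightarrow> 'a list set) \<Rightarrow> 'a set
                       \<Rightarrow> 't set \<Rightarrow> ('s \<Rightarrow> 't list set) \<Rightarrow> ('a \<rightharpoonup> 't) set" where
  "Hom_sub sig A RA X T RT = {\<phi>. dom \<phi> = X \<and> ran \<phi> \<subseteq> T \<and>
      (\<forall>\<Gamma>\<in>sig. \<forall>t\<in>RA \<Gamma>. set t \<subseteq> X \<longrightarrow> map (\<lambda>a. the (\<phi> a)) t \<in> RT \<Gamma>)}"

type_synonym ('v, 'f) mpoly = "('v \<Rightarrow>\<^sub>0 nat) \<Rightarrow>\<^sub>0 'f"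

definition Var :: "'v \<Rightarrow> ('v, 'f::comm_ring_1) mpoly" where
  "Var v = Poly_Mapping.single (Poly_Mapping.single v 1) 1"

definition Const :: "'f::comm_ring_1 \<Rightarrow> ('v, 'f) mpoly" where
  "Const c = Poly_Mapping.single 0 c"

definition polys_in :: "'v set \<Rightarrow> ('v, 'f::comm_ring_1) mpoly set" where
  "polys_in V = {p. \<forall>e\<in>Poly_Mapping.keys p. Poly_Mapping.keys e \<subseteq> V}"

definition mdeg :: "('v \<Rightarrow>\<^sub>0 nat) \<Rightarrow> nat" where
  "mdeg e = (\<Sum>v\<in>Poly_Mapping.keys e. Poly_Mapping.lookup e v)"

definition mono :: "('v \<Rightarrow>\<^sub>0 nat) \<Rightarrow> ('v, 'f::comm_ring_1) mpoly" where
  "mono e = Poly_Mapping.single e 1"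

definition m_map :: "('a \<rightharpoonup> 't) \<Rightarrow> ('a \<times> 't, 'f::comm_ring_1) mpoly" where
  "m_map \<phi> = (\<Prod>a\<in>dom \<phi>. Var (a, the (\<phi> a)))"

definition P_enc :: "'s set \<Rightarrow> ('s \<Rightarrow> nat) \<Rightarrow> 'a set \<Rightarrow> ('s \<Rightarrow> 'a list set) \<Rightarrow> 't set
                     \<Rightarrow> ('s \<Rightarrow> 't list set) \<Rightarrow> ('a \<times> 't, 'f::comm_ring_1) mpoly set" where
  "P_enc sig ar A RA T RT =
     {(\<Sum>i\<in>T. Var (a, i)) - 1 | a. a \<in> A}
   \<union> {Var (a, i) * Var (a, i') | a i i'. a \<in> A \<and> i \<in> T \<and> i' \<in> T \<and> i \<noteq> i'}
   \<union> {(\<Prod>j<ar \<Gamma>. Var (t ! j, c ! j)) | \<Gamma> t c. \<Gamma> \<in> sig \<and> t \<in> RA \<Gamma> \<and>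
        length c = ar \<Gamma> \<and> set c \<subseteq> T \<and> c \<notin> RT \<Gamma>}
   \<union> {Var (a, i) ^ 2 - Var (a, i) | a i. a \<in> A \<and> i \<in> T}"

definition pseudo_reduction ::
  "nat \<Rightarrow> 'v set \<Rightarrow> ('v, 'f::field) mpoly set \<Rightarrow> (('v, 'f) mpoly \<Rightarrow> ('v, 'f) mpoly) \<Rightarrow> bool" where
  "pseudo_reduction D V P R \<longleftrightarrow>
     (\<forall>p\<in>polys_in V. R p \<in> polys_in V) \<and>
     (\<forall>p\<in>polys_in V. \<forall>q\<in>polys_in V. R (p + q) = R p + R q) \<and>
     (\<forall>c. \<forall>p\<in>polys_in V. R (Const c * p) = Const c * R p) \<and>
     R 1 = 1 \<and>
     (\<forall>p\<in>P. R p = 0) \<and>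
     (\<forall>e v. Poly_Mapping.keys e \<subseteq> V \<and> mdeg e \<le> D - 1 \<and> v \<in> V \<longrightarrow>
        R (Var v * mono e) = R (Var v * R (mono e)))"

definition integral_op :: "'v set \<Rightarrow> (('v, 'f::field) mpoly \<Rightarrow> ('v, 'f) mpoly) \<Rightarrow> bool" where
  "integral_op V R \<longleftrightarrow> (\<forall>e. Poly_Mapping.keys e \<subseteq> V \<longrightarrow>
      (\<forall>m\<in>Poly_Mapping.keys (R (mono e)). Poly_Mapping.lookup (R (mono e)) m \<in> \<int>))"

text \<open>The integer polynomial corresponding to an F-polynomial with integer coefficients
  (well defined when F has characteristic 0).\<close>
definition to_int_poly :: "('v, 'f::field) mpoly \<Rightarrow> ('v, int) mpoly" where
  "to_int_poly p = Poly_Mapping.map (\<lambda>c. THE i::int. of_int i = c) p"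

definition Z_linear_on :: "'v set \<Rightarrow> (('v, int) mpoly \<Rightarrow> int) \<Rightarrow> bool" where
  "Z_linear_on V h \<longleftrightarrow>
     (\<forall>p\<in>polys_in V. \<forall>q\<in>polys_in V. h (p + q) = h p + h q) \<and>
     (\<forall>c. \<forall>p\<in>polys_in V. h (Const c * p) = c * h p)"

definition k_consistent :: "'s set \<Rightarrow> 'a set \<Rightarrow> ('s \<Rightarrow> 'a list set) \<Rightarrow> 't set \<Rightarrow> ('s \<Rightarrow> 't list set)
                          \<Rightarrow> nat \<Rightarrow> ('a set \<Rightarrow> ('a \<rightharpoonup> 't) set) \<Rightarrow> bool" where
  "k_consistent sig A RA T RT k \<kappa> \<longleftrightarrow>
     (\<forall>X. X \<subseteq> A \<and> card X \<le> k \<longrightarrow> \<kappa> X \<subseteq> Hom_sub sig A RA X T RT) \<and>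
     (\<forall>X Y. X \<subseteq> A \<and> card X \<le> k \<and> Y \<subseteq> X \<longrightarrow>
        (\<forall>\<phi>\<in>\<kappa> Y. \<exists>\<psi>\<in>\<kappa> X. \<psi> |` Y = \<phi>) \<and>
        (\<forall>\<psi>\<in>\<kappa> X. \<psi> |` Y \<in> \<kappa> Y))"

text \<open>x is an integer solution of L_k(A,T,kappa); x X phi is the value of the variable x_{X,phi}.\<close>
definition L_solution :: "'s set \<Rightarrow> 'a set \<Rightarrow> ('s \<Rightarrow> 'a list set) \<Rightarrow> 't set \<Rightarrow> ('s \<Rightarrow> 't list set)
                        \<Rightarrow> nat \<Rightarrow> ('a set \<Rightarrow> ('a \<rightharpoonup> 't) set) \<Rightarrow> ('a set \<Rightarrow> ('a \<rightharpoonup> 't) \<Rightarrow> int) \<Rightarrow> bool" where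
  "L_solution sig A RA T RT k \<kappa> x \<longleftrightarrow>
     (\<forall>X. X \<subseteq> A \<and> card X \<le> k \<longrightarrow> (\<Sum>\<phi>\<in>\<kappa> X. x X \<phi>) = 1) \<and>
     (\<forall>X Y. X \<subseteq> A \<and> card X \<le> k \<and> Y \<subseteq> X \<longrightarrow>
        (\<forall>\<psi>\<in>\<kappa> Y. (\<Sum>\<phi>\<in>{\<phi>\<in>\<kappa> X. \<phi> |` Y = \<psi>}. x X \<phi>) = x Y \<psi>))"

definition Zaffine_accepts :: "'s set \<Rightarrow> 'a set \<Rightarrow> ('s \<Rightarrow> 'a list set) \<Rightarrow> 't set \<Rightarrow> ('s \<Rightarrow> 't list set)
                              \<Rightarrow> nat \<Rightarrow> bool" where
  "Zaffine_accepts sig A RA T RT k \<longleftrightarrow>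
     (\<exists>\<kappa>. k_consistent sig A RA T RT k \<kappa> \<and>
          (\<forall>X. X \<subseteq> A \<and> card X \<le> k \<longrightarrow> \<kappa> X \<noteq> {}) \<and>
          (\<exists>x. L_solution sig A RA T RT k \<kappa> x))"

definition kappa_R :: "'s set \<Rightarrow> 'a set \<Rightarrow> ('s \<Rightarrow> 'a list set) \<Rightarrow> 't set \<Rightarrow> ('s \<Rightarrow> 't list set)
                      \<Rightarrow> (('a \<times> 't, 'f::field) mpoly \<Rightarrow> ('a \<times> 't, 'f) mpoly) \<Rightarrow> 'a set \<Rightarrow> ('a \<rightharpoonup> 't) set" where
  "kappa_R sig A RA T RT R X = {\<phi>\<in>Hom_sub sig A RA X T RT. R (m_map \<phi>) \<noteq> 0}"

end

theory Submission
  imports Defs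
begin

text \<open>
  Let \<open>\<phi>\<close> be a homomorphism on \<open>Y \<subseteq> X\<close>, \<open>|X| \<le> D\<close>. Multiplying \<open>m\<^sub>\<phi>\<close> by
  \<open>\<Sum>\<^sub>i x\<^bsub>a,i\<^esub>\<close>, which \<open>R\<close> identifies with \<open>1\<close>, and pushing \<open>R\<close> through the
  remaining variables with property (3), one point \<open>a \<in> X - Y\<close> at a time, gives
  \<open>R(m\<^sub>\<phi>) = \<Sum>\<^sub>\<psi> R(m\<^sub>\<psi>)\<close> over all extensions \<open>\<psi>\<close> of \<open>\<phi>\<close> to \<open>X\<close>. Property (3) also
  shows that \<open>R(m) = 0\<close> implies \<open>R(m'm) = 0\<close> within degree \<open>D\<close>; as \<open>m\<^sub>\<psi>\<close> of a
  non-homomorphism \<open>\<psi>\<close> is divisible by a constraint monomial of the encoding, only the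
  extensions in \<open>\<kappa>\<^sub>R(X)\<close> contribute. Hence \<open>\<kappa>\<^sub>R\<close> is closed under restriction and
  extension, it is nonempty because \<open>R(m\<^sub>\<emptyset>) = R(1) = 1\<close>, and, \<open>R(m\<^sub>\<phi>)\<close> having integer
  coefficients, applying \<open>h\<close> to the identity yields the equations of \<open>L\<^sub>k\<close>.
\<close>

lemma polys_in_zero [simp]: "0 \<in> polys_in V"
  and polys_in_one [simp]: "1 \<in> polys_in V"
  by (simp_all add: polys_in_def)

lemma polys_in_Var: "v \<in> V \<Longrightarrow> Var v \<in> polys_in V"
  by (simp add: polys_in_def Var_def)

lemma polys_in_add: "p \<in> polys_in V \<Longrightarrow> q \<in> polys_in V \<Longrightarrow> p + q \<in> polys_in V"
  unfolding polys_in_def by (auto dest: subsetD[OF keys_add])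

lemma polys_in_uminus: "p \<in> polys_in V \<Longrightarrow> - p \<in> polys_in V"
  by (simp add: polys_in_def)

lemma polys_in_mult: "p \<in> polys_in V \<Longrightarrow> q \<in> polys_in V \<Longrightarrow> p * q \<in> polys_in V"
  unfolding polys_in_def using keys_mult[of p q] by (fastforce dest: subsetD[OF keys_add])

lemma polys_in_sum: "(\<And>i. i \<in> I \<Longrightarrow> f i \<in> polys_in V) \<Longrightarrow> sum f I \<in> polys_in V"
  by (induction I rule: infinite_finite_induct) (auto simp: polys_in_add)

lemma mdeg_eq_sum_superset:
  "finite S \<Longrightarrow> Poly_Mapping.keys e \<subseteq> S \<Longrightarrow> mdeg e = (\<Sum>v\<in>S. Poly_Mapping.lookup e v)"
  unfolding mdeg_def by (rule sum.mono_neutral_left) (auto simp: in_keys_iff)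

lemma mdeg_add: "mdeg (e + f) = mdeg e + mdeg f"
proof -
  let ?S = "Poly_Mapping.keys e \<union> Poly_Mapping.keys f"
  have "mdeg (e + f) = (\<Sum>v\<in>?S. Poly_Mapping.lookup (e + f) v)"
    using keys_add[of e f] by (intro mdeg_eq_sum_superset) auto
  also have "\<dots> = (\<Sum>v\<in>?S. Poly_Mapping.lookup e v) + (\<Sum>v\<in>?S. Poly_Mapping.lookup f v)"
    by (simp add: lookup_add sum.distrib)
  also have "\<dots> = mdeg e + mdeg f"
    by (subst (1 2) mdeg_eq_sum_superset[of ?S]) auto
  finally show ?thesis .
qed

lemma mdeg_single: "mdeg (Poly_Mapping.single v n) = n"
  by (simp add: mdeg_def)

definition var_prod :: "'v list \<Rightarrow> ('v, 'f::comm_ring_1) mpoly" where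
  "var_prod vs = prod_list (map Var vs)"

definition exps_of_list :: "'v list \<Rightarrow> 'v \<Rightarrow>\<^sub>0 nat" where
  "exps_of_list vs = sum_list (map (\<lambda>v. Poly_Mapping.single v 1) vs)"

lemma var_prod_eq_mono: "var_prod vs = mono (exps_of_list vs)"
  by (induction vs) (auto simp: var_prod_def exps_of_list_def mono_def Var_def mult_single)

lemma keys_exps_of_list: "Poly_Mapping.keys (exps_of_list vs) \<subseteq> set vs"
  by (induction vs) (auto simp: exps_of_list_def dest: subsetD[OF keys_add])

lemma mdeg_exps_of_list: "mdeg (exps_of_list vs) = length vs"
  by (induction vs) (simp_all add: exps_of_list_def mdeg_add mdeg_single, simp add: mdeg_def)

lemma prod_list_map_eq_prod_lessThan: "prod_list (map f xs) = (\<Prod>j<length xs. f (xs ! j))"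
  by (induction xs) (simp_all add: prod.lessThan_Suc_shift del: prod.lessThan_Suc)

lemma var_prod_in_polys_in: "set vs \<subseteq> V \<Longrightarrow> var_prod vs \<in> polys_in V"
  by (induction vs) (auto simp: var_prod_def polys_in_mult polys_in_Var)

section \<open>Pseudo-reduction operators\<close>

locale pseudo_reduction_op =
  fixes D :: nat and V :: "'v set" and P :: "('v, 'f::field) mpoly set"
    and R :: "('v, 'f) mpoly \<Rightarrow> ('v, 'f) mpoly"
  assumes pseudo_reduction: "pseudo_reduction D V P R"
begin

lemma R_closed: "p \<in> polys_in V \<Longrightarrow> R p \<in> polys_in V"
  and R_add: "p \<in> polys_in V \<Longrightarrow> q \<in> polys_in V \<Longrightarrow> R (p + q) = R p + R q"
  and R_Const_mult: "p \<in> polys_in V \<Longrightarrow> R (Const c * p) = Const c * R p"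
  and R_one: "R 1 = 1"
  and R_eq_0_on_P: "p \<in> P \<Longrightarrow> R p = 0"
  using pseudo_reduction by (simp_all add: pseudo_reduction_def)

lemma R_Var_mult_mono:
  "Poly_Mapping.keys e \<subseteq> V \<Longrightarrow> mdeg e < D \<Longrightarrow> v \<in> V \<Longrightarrow>
    R (Var v * mono e) = R (Var v * R (mono e))"
  using pseudo_reduction unfolding pseudo_reduction_def by force

lemma R_zero: "R 0 = 0"
  using R_add[of 0 0] by simp

lemma R_uminus: "p \<in> polys_in V \<Longrightarrow> R (- p) = - R p"
  using R_Const_mult[of p "-1"] by (simp add: Const_def single_uminus)

lemma R_diff: "p \<in> polys_in V \<Longrightarrow> q \<in> polys_in V \<Longrightarrow> R (p - q) = R p - R q"
  using R_add[of p "- q"] by (simp add: R_uminus polys_in_uminus)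

lemma R_sum: "(\<And>i. i \<in> I \<Longrightarrow> f i \<in> polys_in V) \<Longrightarrow> R (sum f I) = (\<Sum>i\<in>I. R (f i))"
  by (induction I rule: infinite_finite_induct) (simp_all add: R_zero R_add polys_in_sum)

lemma R_var_prod_Cons:
  "set (v # vs) \<subseteq> V \<Longrightarrow> length vs < D \<Longrightarrow> R (var_prod (v # vs)) = R (Var v * R (var_prod vs))"
  using R_Var_mult_mono[of "exps_of_list vs" v] keys_exps_of_list[of vs]
  by (simp add: var_prod_eq_mono[symmetric] mdeg_exps_of_list) (simp add: var_prod_def, blast)

lemma R_var_prod_append_eq_0:
  assumes "set vs \<union> set ws \<subseteq> V" "length vs + length ws \<le> D" "R (var_prod ws) = 0"
  shows "R (var_prod (vs @ ws)) = 0"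
  using assms
proof (induction vs)
  case (Cons v vs)
  then have "R (var_prod (v # vs @ ws)) = R (Var v * R (var_prod (vs @ ws)))"
    by (intro R_var_prod_Cons) auto
  with Cons show ?case by (simp add: R_zero)
qed simp

lemma sum_R_var_prod_snoc:
  assumes P: "(\<Sum>i\<in>I. Var (f i)) - 1 \<in> P" and f: "f ` I \<subseteq> V"
    and "set vs \<subseteq> V" "length vs < D"
  shows "(\<Sum>i\<in>I. R (var_prod (vs @ [f i]))) = R (var_prod vs)"
  using assms(3,4)
proof (induction vs)
  case Nil
  have vars: "(\<Sum>i\<in>I. Var (f i)) \<in> polys_in V"
    using f by (intro polys_in_sum polys_in_Var) auto
  have "R (\<Sum>i\<in>I. Var (f i)) - R 1 = 0"
    using R_eq_0_on_P[OF P] R_diff[OF vars polys_in_one] by simp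
  moreover have "R (\<Sum>i\<in>I. Var (f i)) = (\<Sum>i\<in>I. R (Var (f i)))"
    using f by (intro R_sum polys_in_Var) auto
  ultimately show ?case by (simp add: var_prod_def)
next
  case (Cons v vs)
  have "(\<Sum>i\<in>I. R (var_prod (v # vs @ [f i]))) = (\<Sum>i\<in>I. R (Var v * R (var_prod (vs @ [f i]))))"
    using Cons.prems f by (intro sum.cong refl R_var_prod_Cons) auto
  also have "\<dots> = R (\<Sum>i\<in>I. Var v * R (var_prod (vs @ [f i])))"
    using Cons.prems f
    by (intro R_sum[symmetric] polys_in_mult polys_in_Var R_closed var_prod_in_polys_in) auto
  also have "\<dots> = R (Var v * R (var_prod vs))"
    using Cons by (simp add: sum_distrib_left[symmetric])
  also have "\<dots> = R (var_prod (v # vs))"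
    using Cons.prems by (intro R_var_prod_Cons[symmetric]) auto
  finally show ?case by simp
qed

end

section \<open>Partial maps and their extensions\<close>

definition graph_list :: "('a \<rightharpoonup> 'b) \<Rightarrow> 'a list \<Rightarrow> ('a \<times> 'b) list" where
  "graph_list \<phi> xs = map (\<lambda>a. (a, the (\<phi> a))) xs"

lemma m_map_eq_var_prod: "distinct xs \<Longrightarrow> set xs = dom \<phi> \<Longrightarrow> m_map \<phi> = var_prod (graph_list \<phi> xs)"
  unfolding m_map_def var_prod_def graph_list_def
  by (simp add: prod.distinct_set_conv_list[symmetric] o_def)

lemma the_in_ran: "a \<in> dom \<phi> \<Longrightarrow> the (\<phi> a) \<in> ran \<phi>"
  by (auto intro: ranI)

lemma set_graph_list_subset: "set xs \<subseteq> dom \<phi> \<Longrightarrow> set (graph_list \<phi> xs) \<subseteq> set xs \<times> ran \<phi>"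
  by (auto simp: graph_list_def intro: the_in_ran)

lemma graph_list_restrict_map: "set xs \<subseteq> Y \<Longrightarrow> graph_list (\<phi> |` Y) xs = graph_list \<phi> xs"
  by (auto simp: graph_list_def)

lemma ran_restrict_map_subset: "ran (\<phi> |` Y) \<subseteq> ran \<phi>"
  by (auto dest: ran_restrictD intro: ranI)

definition extensions :: "'b set \<Rightarrow> ('a \<rightharpoonup> 'b) \<Rightarrow> 'a set \<Rightarrow> ('a \<rightharpoonup> 'b) set" where
  "extensions T \<phi> X = {\<psi>. dom \<psi> = X \<and> ran \<psi> \<subseteq> T \<and> \<psi> |` dom \<phi> = \<phi>}"

lemma finite_extensions: "finite X \<Longrightarrow> finite T \<Longrightarrow> finite (extensions T \<phi> X)"
  by (rule finite_subset[OF _ finite_set_of_finite_maps[of X T]]) (auto simp: extensions_def)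

lemma restrict_map_dom: "\<phi> |` dom \<phi> = \<phi>"
  by (rule ext) (simp add: restrict_map_def domIff)

lemma extensions_dom: "ran \<phi> \<subseteq> T \<Longrightarrow> extensions T \<phi> (dom \<phi>) = {\<phi>}"
  by (auto simp: extensions_def restrict_map_dom) (metis restrict_map_dom)

lemma extensions_insert:
  assumes "dom \<phi> \<subseteq> X" "a \<notin> X"
  shows "extensions T \<phi> (insert a X) = (\<lambda>(\<psi>, i). \<psi>(a \<mapsto> i)) ` (extensions T \<phi> X \<times> T)"
proof (intro equalityI subsetI)
  fix \<psi> assume "\<psi> \<in> extensions T \<phi> (insert a X)"
  then have dom: "dom \<psi> = insert a X" and ran: "ran \<psi> \<subseteq> T" and restr: "\<psi> |` dom \<phi> = \<phi>"
    by (auto simp: extensions_def)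
  have "a \<in> dom \<psi>"
    using dom by simp
  then have "\<psi> a = Some (the (\<psi> a))"
    by (simp add: domIff)
  then have upd: "\<psi> = (\<psi> |` X)(a \<mapsto> the (\<psi> a))"
    using dom by (auto simp: fun_eq_iff restrict_map_def)
  have "\<psi> |` X \<in> extensions T \<phi> X"
    using dom ran restr assms(1) ran_restrict_map_subset[of \<psi> X]
    by (auto simp: extensions_def Int_absorb1)
  moreover have "the (\<psi> a) \<in> T"
    using \<open>a \<in> dom \<psi>\<close> ran the_in_ran[of a \<psi>] by auto
  ultimately show "\<psi> \<in> (\<lambda>(\<psi>, i). \<psi>(a \<mapsto> i)) ` (extensions T \<phi> X \<times> T)"
    by (subst upd) (rule image_eqI[where x = "(\<psi> |` X, the (\<psi> a))"], auto)
next
  fix \<psi>' assume "\<psi>' \<in> (\<lambda>(\<psi>, i). \<psi>(a \<mapsto> i)) ` (extensions T \<phi> X \<times> T)"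
  then obtain \<psi> i where \<psi>': "\<psi>' = \<psi>(a \<mapsto> i)" and "\<psi> \<in> extensions T \<phi> X" "i \<in> T"
    by auto
  then have dom: "dom \<psi> = X" and ran: "ran \<psi> \<subseteq> T" and restr: "\<psi> |` dom \<phi> = \<phi>"
    by (auto simp: extensions_def)
  have "\<psi>(a \<mapsto> i) |` dom \<phi> = \<psi> |` dom \<phi>"
    using assms by (auto simp: restrict_map_def fun_eq_iff)
  moreover have "ran (\<psi>(a \<mapsto> i)) = insert i (ran \<psi>)"
    using dom assms(2) by (auto intro: ran_map_upd)
  ultimately show "\<psi>' \<in> extensions T \<phi> (insert a X)"
    using \<open>i \<in> T\<close> dom ran restr unfolding \<psi>' extensions_def by auto
qed

lemma inj_on_extensions_update:
  "a \<notin> X \<Longrightarrow> inj_on (\<lambda>(\<psi>, i). \<psi>(a \<mapsto> i)) (extensions T \<phi> X \<times> T)"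
proof (rule inj_onI, clarify)
  fix \<psi> i \<psi>' i'
  assume "a \<notin> X" "\<psi> \<in> extensions T \<phi> X" "\<psi>' \<in> extensions T \<phi> X" and eq: "\<psi>(a \<mapsto> i) = \<psi>'(a \<mapsto> i')"
  then have "\<psi> a = None" "\<psi>' a = None" by (auto simp: extensions_def)
  then have "\<psi> = (\<psi>(a \<mapsto> i))(a := None)" "\<psi>' = (\<psi>'(a \<mapsto> i'))(a := None)"
    by auto
  with eq show "\<psi> = \<psi>' \<and> i = i'"
    using map_upd_eqD1[OF eq] by simp
qed

lemma restrict_map_in_Hom_sub:
  assumes "\<psi> \<in> Hom_sub sig A RA X T RT" "Y \<subseteq> X"
  shows "\<psi> |` Y \<in> Hom_sub sig A RA Y T RT"
proof -
  have "map (\<lambda>a. the ((\<psi> |` Y) a)) t \<in> RT \<Gamma>" if "\<Gamma> \<in> sig" "t \<in> RA \<Gamma>" "set t \<subseteq> Y" for \<Gamma> t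
  proof -
    have "map (\<lambda>a. the ((\<psi> |` Y) a)) t = map (\<lambda>a. the (\<psi> a)) t"
      using that(3) by auto
    moreover have "map (\<lambda>a. the (\<psi> a)) t \<in> RT \<Gamma>"
      using assms that unfolding Hom_sub_def by blast
    ultimately show ?thesis by (simp only:)
  qed
  then show ?thesis
    using assms ran_restrict_map_subset[of \<psi> Y] unfolding Hom_sub_def by auto
qed

section \<open>Integer coefficients in characteristic zero\<close>

lemma of_int_eq_iff_CHAR_0:
  assumes "CHAR('f::ring_1) = 0"
  shows "(of_int a :: 'f) = of_int b \<longleftrightarrow> a = b"
  using of_int_eq_0_iff_char_dvd[where 'a = 'f, of "a - b"] assms by auto

lemma lookup_to_int_poly:
  assumes "CHAR('f::field) = 0" "Poly_Mapping.lookup p m = (of_int z :: 'f)"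
  shows "Poly_Mapping.lookup (to_int_poly p) m = z"
  using assms of_int_eq_iff_CHAR_0[OF assms(1), of _ z] of_int_eq_iff_CHAR_0[OF assms(1), of z 0]
  by (auto simp: to_int_poly_def Poly_Mapping.map.rep_eq when_def)

definition int_coeffs :: "('v, 'f::field) mpoly \<Rightarrow> bool" where
  "int_coeffs p \<longleftrightarrow> (\<forall>m. Poly_Mapping.lookup p m \<in> \<int>)"

lemma to_int_poly_eqI:
  assumes "CHAR('f::field) = 0" "\<And>m. Poly_Mapping.lookup p m = (of_int (Poly_Mapping.lookup q m) :: 'f)"
  shows "to_int_poly p = q"
  using assms by (intro poly_mapping_eqI lookup_to_int_poly)

lemma to_int_poly_one: "CHAR('f::field) = 0 \<Longrightarrow> to_int_poly (1 :: ('v, 'f) mpoly) = 1"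
  by (rule to_int_poly_eqI) (simp_all add: lookup_one when_def)

lemma to_int_poly_sum:
  assumes "CHAR('f::field) = 0" "\<And>i. i \<in> I \<Longrightarrow> int_coeffs (q i :: ('v, 'f) mpoly)"
  shows "to_int_poly (sum q I) = (\<Sum>i\<in>I. to_int_poly (q i))"
proof (rule to_int_poly_eqI[OF assms(1)])
  fix m
  have "of_int (Poly_Mapping.lookup (to_int_poly (q i)) m) = Poly_Mapping.lookup (q i) m" if "i \<in> I" for i
    using assms(2)[OF that] lookup_to_int_poly[OF assms(1)] unfolding int_coeffs_def
    by (metis Ints_cases)
  then show "Poly_Mapping.lookup (sum q I) m = of_int (Poly_Mapping.lookup (\<Sum>i\<in>I. to_int_poly (q i)) m)"
    by (simp add: lookup_sum)
qed

lemma to_int_poly_in_polys_in: "p \<in> polys_in V \<Longrightarrow> to_int_poly p \<in> polys_in V"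
  unfolding polys_in_def to_int_poly_def
  by (auto simp: in_keys_iff Poly_Mapping.map.rep_eq when_def)

lemma Z_linear_on_sum:
  assumes "Z_linear_on V h" "\<And>i. i \<in> I \<Longrightarrow> q i \<in> polys_in V"
  shows "h (sum q I) = (\<Sum>i\<in>I. h (q i))"
proof -
  have "h 0 = 0"
    using assms(1) unfolding Z_linear_on_def by (metis add_0 add_cancel_right_right polys_in_zero)
  with assms show ?thesis
    by (induction I rule: infinite_finite_induct) (simp_all add: Z_linear_on_def polys_in_sum)
qed

lemma Z_linear_on_lookup_0: "Z_linear_on V (\<lambda>p. Poly_Mapping.lookup p 0)"
  unfolding Z_linear_on_def
  by (auto simp: lookup_add Const_def mult_map_scale_conv_mult[symmetric] Poly_Mapping.map.rep_eq when_def)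

section \<open>Pseudo-reduction operators for the CSP encoding\<close>

locale csp_pseudo_reduction =
  fixes sig :: "'s set" and ar :: "'s \<Rightarrow> nat"
    and A :: "'a set" and RA :: "'s \<Rightarrow> 'a list set"
    and T :: "'t set" and RT :: "'s \<Rightarrow> 't list set"
    and D :: nat
    and R :: "('a \<times> 't, 'f::field) mpoly \<Rightarrow> ('a \<times> 't, 'f) mpoly"
  assumes T_struct: "is_structure sig ar T RT"
    and A_inst: "is_instance sig ar A RA"
    and R_pr: "pseudo_reduction D (A \<times> T) (P_enc sig ar A RA T RT) R"
begin

sublocale pseudo_reduction_op D "A \<times> T" "P_enc sig ar A RA T RT" R
  by (rule pseudo_reduction_op.intro) (rule R_pr)

abbreviation \<kappa> :: "'a set \<Rightarrow> ('a \<rightharpoonup> 't) set" where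
  "\<kappa> \<equiv> kappa_R sig A RA T RT R"

lemma finite_A: "finite A"
  using A_inst by (simp add: is_instance_def is_structure_def)

lemma finite_T: "finite T"
  using T_struct by (simp add: is_structure_def)

lemma sum_R_m_map_update:
  assumes "dom \<psi> \<subseteq> A" "ran \<psi> \<subseteq> T" "a \<in> A - dom \<psi>" "card (dom \<psi>) < D"
  shows "(\<Sum>i\<in>T. R (m_map (\<psi>(a \<mapsto> i)))) = R (m_map \<psi>)"
proof -
  obtain xs where xs: "distinct xs" "set xs = dom \<psi>"
    using finite_distinct_list[OF finite_subset[OF assms(1) finite_A]] by blast
  have m_map_upd: "(m_map (\<psi>(a \<mapsto> i)) :: ('a \<times> 't, 'f) mpoly) = var_prod (graph_list \<psi> xs @ [(a, i)])" for i
  proof -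
    have "(m_map (\<psi>(a \<mapsto> i)) :: ('a \<times> 't, 'f) mpoly) = var_prod (graph_list (\<psi>(a \<mapsto> i)) (xs @ [a]))"
      using xs assms(3) by (intro m_map_eq_var_prod) auto
    also have "graph_list (\<psi>(a \<mapsto> i)) (xs @ [a]) = graph_list \<psi> xs @ [(a, i)]"
      using xs assms(3) by (auto simp: graph_list_def)
    finally show ?thesis .
  qed
  have "(\<Sum>i\<in>T. R (m_map (\<psi>(a \<mapsto> i)))) = (\<Sum>i\<in>T. R (var_prod (graph_list \<psi> xs @ [(a, i)])))"
    by (simp add: m_map_upd)
  also have "\<dots> = R (var_prod (graph_list \<psi> xs))"
  proof (rule sum_R_var_prod_snoc)
    show "(\<Sum>i\<in>T. Var (a, i)) - 1 \<in> P_enc sig ar A RA T RT"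
      using assms(3) unfolding P_enc_def by blast
    show "set (graph_list \<psi> xs) \<subseteq> A \<times> T"
      using set_graph_list_subset[of xs \<psi>] xs assms(1,2) by auto
    show "length (graph_list \<psi> xs) < D"
      using xs assms(4) distinct_card[OF xs(1)] by (simp add: graph_list_def)
  qed (use assms(3) in auto)
  also have "\<dots> = R (m_map \<psi>)"
    using xs by (simp add: m_map_eq_var_prod)
  finally show ?thesis .
qed

lemma R_m_map_eq_sum_extensions:
  assumes "dom \<phi> \<subseteq> X" "X \<subseteq> A" "ran \<phi> \<subseteq> T" "card X \<le> D"
  shows "R (m_map \<phi>) = (\<Sum>\<psi>\<in>extensions T \<phi> X. R (m_map \<psi>))"
proof -
  have "R (m_map \<phi>) = (\<Sum>\<psi>\<in>extensions T \<phi> (dom \<phi> \<union> S). R (m_map \<psi>))"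
    if "S \<subseteq> A - dom \<phi>" "card (dom \<phi> \<union> S) \<le> D" for S
  proof -
    have "finite S"
      using that(1) finite_subset finite_A by blast
    then show ?thesis
      using that
    proof (induction S rule: finite_induct)
      case empty
      then show ?case
        using assms(3) by (simp add: extensions_dom)
    next
      case (insert a S)
      let ?X = "dom \<phi> \<union> S"
      have fin: "finite ?X"
        using insert.prems(1) assms(1,2) by (intro finite_subset[OF _ finite_A]) auto
      have "a \<notin> ?X"
        using insert by auto
      then have card: "card ?X < D"
        using insert.prems(2) fin by simp
      have ext: "extensions T \<phi> (dom \<phi> \<union> insert a S) = (\<lambda>(\<psi>, i). \<psi>(a \<mapsto> i)) ` (extensions T \<phi> ?X \<times> T)"
        using extensions_insert[of \<phi> ?X a T] \<open>a \<notin> ?X\<close> by simp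
      have "(\<Sum>\<psi>\<in>extensions T \<phi> (dom \<phi> \<union> insert a S). R (m_map \<psi>))
          = (\<Sum>\<psi>\<in>extensions T \<phi> ?X. \<Sum>i\<in>T. R (m_map (\<psi>(a \<mapsto> i))))"
        unfolding ext using inj_on_extensions_update[OF \<open>a \<notin> ?X\<close>, of T \<phi>]
        by (simp add: sum.reindex sum.cartesian_product split_def)
      also have "\<dots> = (\<Sum>\<psi>\<in>extensions T \<phi> ?X. R (m_map \<psi>))"
        using insert.prems card \<open>a \<notin> ?X\<close> assms(1,2)
        by (intro sum.cong refl sum_R_m_map_update) (auto simp: extensions_def)
      also have "\<dots> = R (m_map \<phi>)"
        using insert card by (intro insert.IH[symmetric]) auto
      finally show ?case ..
    qed
  qed
  from this[of "X - dom \<phi>"] show ?thesis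
    using assms by (simp add: Un_absorb1 Diff_mono)
qed

lemma R_m_map_eq_0_if_restriction:
  assumes "dom \<psi> \<subseteq> A" "ran \<psi> \<subseteq> T" "card (dom \<psi>) \<le> D" "Y \<subseteq> dom \<psi>"
    and "R (m_map (\<psi> |` Y)) = 0"
  shows "R (m_map \<psi>) = 0"
proof -
  have fin: "finite (dom \<psi>)"
    using finite_subset[OF assms(1) finite_A] .
  obtain ws where ws: "distinct ws" "set ws = Y"
    using finite_distinct_list[OF finite_subset[OF assms(4) fin]] by blast
  obtain vs where vs: "distinct vs" "set vs = dom \<psi> - Y"
    using finite_distinct_list[OF finite_Diff[OF fin]] by blast
  have "(m_map (\<psi> |` Y) :: ('a \<times> 't, 'f) mpoly) = var_prod (graph_list (\<psi> |` Y) ws)"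
    using ws assms(4) by (intro m_map_eq_var_prod) auto
  then have ws_zero: "R (var_prod (graph_list \<psi> ws)) = 0"
    using assms(5) ws by (simp add: graph_list_restrict_map)
  have vs_ws: "set (vs @ ws) = dom \<psi>"
    using vs ws assms(4) by auto
  have "set (graph_list \<psi> (vs @ ws)) \<subseteq> dom \<psi> \<times> ran \<psi>"
    using set_graph_list_subset[of "vs @ ws" \<psi>] unfolding vs_ws by simp
  also have "\<dots> \<subseteq> A \<times> T"
    using assms(1,2) by auto
  finally have "set (graph_list \<psi> vs) \<union> set (graph_list \<psi> ws) \<subseteq> A \<times> T"
    by (simp add: graph_list_def)
  moreover have "length (graph_list \<psi> vs) + length (graph_list \<psi> ws) \<le> D"
  proof -
    have "distinct (vs @ ws)"
      using vs ws by auto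
    then have "length (vs @ ws) = card (dom \<psi>)"
      using vs_ws distinct_card by metis
    then show ?thesis
      using assms(3) by (simp add: graph_list_def)
  qed
  ultimately have "R (var_prod (graph_list \<psi> vs @ graph_list \<psi> ws)) = 0"
    using ws_zero by (rule R_var_prod_append_eq_0)
  moreover have "(m_map \<psi> :: ('a \<times> 't, 'f) mpoly) = var_prod (graph_list \<psi> (vs @ ws))"
    using vs ws vs_ws by (intro m_map_eq_var_prod) auto
  ultimately show ?thesis
    by (simp add: graph_list_def)
qed

lemma R_m_map_eq_0_if_not_hom:
  assumes "dom \<psi> \<subseteq> A" "ran \<psi> \<subseteq> T" "card (dom \<psi>) \<le> D"
    and "\<psi> \<notin> Hom_sub sig A RA (dom \<psi>) T RT"
  shows "R (m_map \<psi>) = 0"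
proof -
  obtain \<Gamma> t where \<Gamma>: "\<Gamma> \<in> sig" "t \<in> RA \<Gamma>" "set t \<subseteq> dom \<psi>"
    and not_in: "map (\<lambda>a. the (\<psi> a)) t \<notin> RT \<Gamma>"
    using assms(2,4) unfolding Hom_sub_def by blast
  have "distinct t" "length t = ar \<Gamma>"
    using A_inst \<Gamma> by (auto simp: is_instance_def is_structure_def)
  let ?c = "map (\<lambda>a. the (\<psi> a)) t"
  have "set ?c \<subseteq> T"
    using \<Gamma>(3) assms(2) the_in_ran[of _ \<psi>] by auto
  then have "(\<Prod>j<ar \<Gamma>. Var (t ! j, ?c ! j)) \<in> {\<Prod>j<ar \<Gamma>'. Var (t' ! j, c ! j) | \<Gamma>' t' c.
      \<Gamma>' \<in> sig \<and> t' \<in> RA \<Gamma>' \<and> length c = ar \<Gamma>' \<and> set c \<subseteq> T \<and> c \<notin> RT \<Gamma>'}"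
    using \<Gamma> not_in \<open>length t = ar \<Gamma>\<close> by fastforce
  then have "(\<Prod>j<ar \<Gamma>. Var (t ! j, ?c ! j)) \<in> P_enc sig ar A RA T RT"
    unfolding P_enc_def by blast
  moreover have "(m_map (\<psi> |` set t) :: ('a \<times> 't, 'f) mpoly) = (\<Prod>j<ar \<Gamma>. Var (t ! j, ?c ! j))"
  proof -
    have "(m_map (\<psi> |` set t) :: ('a \<times> 't, 'f) mpoly) = var_prod (graph_list \<psi> t)"
      using \<open>distinct t\<close> \<Gamma>(3)
      by (simp add: m_map_eq_var_prod[of t] graph_list_restrict_map Int_absorb1)
    also have "\<dots> = (\<Prod>j<ar \<Gamma>. Var (t ! j, ?c ! j))"
      unfolding var_prod_def graph_list_def map_map prod_list_map_eq_prod_lessThan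
      using \<open>length t = ar \<Gamma>\<close> by simp
    finally show ?thesis .
  qed
  ultimately have "R (m_map (\<psi> |` set t)) = 0"
    by (metis R_eq_0_on_P)
  then show ?thesis
    using R_m_map_eq_0_if_restriction assms(1-3) \<Gamma>(3) by blast
qed

lemma kappa_R_dom_ran: "\<phi> \<in> \<kappa> X \<Longrightarrow> dom \<phi> = X \<and> ran \<phi> \<subseteq> T"
  by (simp add: kappa_R_def Hom_sub_def)

lemma R_m_map_eq_sum_kappa_R:
  assumes "X \<subseteq> A" "card X \<le> D" "Y \<subseteq> X" "\<psi> \<in> \<kappa> Y"
  shows "R (m_map \<psi>) = (\<Sum>\<phi>\<in>{\<phi>\<in>\<kappa> X. \<phi> |` Y = \<psi>}. R (m_map \<phi>))"
proof -
  have \<psi>: "dom \<psi> = Y" "ran \<psi> \<subseteq> T"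
    using assms(4) kappa_R_dom_ran by auto
  have "finite (extensions T \<psi> X)"
    using finite_extensions[OF finite_subset[OF assms(1) finite_A] finite_T] .
  moreover have "{\<phi>\<in>\<kappa> X. \<phi> |` Y = \<psi>} \<subseteq> extensions T \<psi> X"
    using \<psi> by (auto simp: extensions_def dest: kappa_R_dom_ran)
  moreover have "R (m_map \<phi>) = 0" if "\<phi> \<in> extensions T \<psi> X - {\<phi>\<in>\<kappa> X. \<phi> |` Y = \<psi>}" for \<phi>
  proof -
    have "dom \<phi> = X" "ran \<phi> \<subseteq> T" "\<phi> |` Y = \<psi>" "\<phi> \<notin> \<kappa> X"
      using that \<psi> by (auto simp: extensions_def)
    then show ?thesis
      using R_m_map_eq_0_if_not_hom[of \<phi>] assms(1,2) by (auto simp: kappa_R_def)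
  qed
  ultimately have "(\<Sum>\<phi>\<in>extensions T \<psi> X. R (m_map \<phi>)) = (\<Sum>\<phi>\<in>{\<phi>\<in>\<kappa> X. \<phi> |` Y = \<psi>}. R (m_map \<phi>))"
    by (intro sum.mono_neutral_right) auto
  moreover have "R (m_map \<psi>) = (\<Sum>\<phi>\<in>extensions T \<psi> X. R (m_map \<phi>))"
    using \<psi> assms by (intro R_m_map_eq_sum_extensions) auto
  ultimately show ?thesis
    by simp
qed

lemma kappa_R_extend:
  assumes "X \<subseteq> A" "card X \<le> D" "Y \<subseteq> X" "\<psi> \<in> \<kappa> Y"
  shows "\<exists>\<phi>\<in>\<kappa> X. \<phi> |` Y = \<psi>"
proof -
  have "(\<Sum>\<phi>\<in>{\<phi>\<in>\<kappa> X. \<phi> |` Y = \<psi>}. R (m_map \<phi>)) \<noteq> 0"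
    using R_m_map_eq_sum_kappa_R[OF assms] assms(4) by (simp add: kappa_R_def)
  then show ?thesis
    by (metis (mono_tags, lifting) empty_Collect_eq sum.empty)
qed

lemma kappa_R_restrict:
  assumes "X \<subseteq> A" "card X \<le> D" "Y \<subseteq> X" "\<phi> \<in> \<kappa> X"
  shows "\<phi> |` Y \<in> \<kappa> Y"
proof -
  have \<phi>: "dom \<phi> = X" "ran \<phi> \<subseteq> T" "\<phi> \<in> Hom_sub sig A RA X T RT" "R (m_map \<phi>) \<noteq> 0"
    using assms(4) by (auto simp: kappa_R_def Hom_sub_def)
  then have "R (m_map (\<phi> |` Y)) \<noteq> 0"
    using R_m_map_eq_0_if_restriction[of \<phi> Y] assms(1-3) by auto
  then show ?thesis
    using restrict_map_in_Hom_sub[OF \<phi>(3) assms(3)] by (simp add: kappa_R_def)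
qed

(* If a relation of A contained the empty tuple but the corresponding relation of T did not,
   1 would be a generator of the encoding; R 1 = 1 rules this out. *)
lemma empty_in_kappa_R: "Map.empty \<in> \<kappa> {}"
proof -
  have "R (m_map Map.empty) = 1"
    by (simp add: m_map_def R_one)
  then have "Map.empty \<in> Hom_sub sig A RA (dom Map.empty) T RT"
    using R_m_map_eq_0_if_not_hom[of Map.empty] by auto
  with \<open>R (m_map Map.empty) = 1\<close> show ?thesis
    by (simp add: kappa_R_def)
qed

lemma kappa_R_nonempty: "X \<subseteq> A \<Longrightarrow> card X \<le> D \<Longrightarrow> \<kappa> X \<noteq> {}"
  using kappa_R_extend[of X "{}" Map.empty] empty_in_kappa_R by auto

lemma k_consistent_kappa_R: "k \<le> D \<Longrightarrow> k_consistent sig A RA T RT k \<kappa>"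
  unfolding k_consistent_def using kappa_R_extend kappa_R_restrict
  by (auto simp: kappa_R_def)

lemma R_m_map_in_polys_in:
  assumes "dom \<phi> \<subseteq> A" "ran \<phi> \<subseteq> T"
  shows "R (m_map \<phi>) \<in> polys_in (A \<times> T)"
proof -
  obtain xs where xs: "distinct xs" "set xs = dom \<phi>"
    using finite_distinct_list[OF finite_subset[OF assms(1) finite_A]] by blast
  then show ?thesis
    using set_graph_list_subset[of xs \<phi>] assms
    by (auto simp: m_map_eq_var_prod intro!: R_closed var_prod_in_polys_in)
qed

lemma int_coeffs_R_m_map:
  assumes "integral_op (A \<times> T) R" "dom \<phi> \<subseteq> A" "ran \<phi> \<subseteq> T"
  shows "int_coeffs (R (m_map \<phi>))"
proof -
  obtain xs where xs: "distinct xs" "set xs = dom \<phi>"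
    using finite_distinct_list[OF finite_subset[OF assms(2) finite_A]] by blast
  let ?e = "exps_of_list (graph_list \<phi> xs)"
  have "(m_map \<phi> :: ('a \<times> 't, 'f) mpoly) = mono ?e"
    using xs by (simp add: m_map_eq_var_prod var_prod_eq_mono)
  moreover have "Poly_Mapping.keys ?e \<subseteq> A \<times> T"
  proof -
    have "Poly_Mapping.keys ?e \<subseteq> dom \<phi> \<times> ran \<phi>"
      using keys_exps_of_list[of "graph_list \<phi> xs"] set_graph_list_subset[of xs \<phi>] xs by simp
    also have "\<dots> \<subseteq> A \<times> T"
      using assms(2,3) by auto
    finally show ?thesis .
  qed
  ultimately have "Poly_Mapping.lookup (R (m_map \<phi>)) m \<in> \<int>"
    if "m \<in> Poly_Mapping.keys (R (m_map \<phi>))" for m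
    using assms(1) that unfolding integral_op_def by auto
  then show ?thesis
    unfolding int_coeffs_def by (metis in_keys_iff Ints_0)
qed

lemma L_solution_kappa_R:
  assumes "CHAR('f) = 0" "integral_op (A \<times> T) R" "Z_linear_on (A \<times> T) h" "h 1 = 1" "k \<le> D"
  shows "L_solution sig A RA T RT k \<kappa> (\<lambda>X \<phi>. h (to_int_poly (R (m_map \<phi>))))"
proof -
  let ?x = "\<lambda>\<phi>. h (to_int_poly (R (m_map \<phi>)))"
  have restr: "(\<Sum>\<phi>\<in>{\<phi>\<in>\<kappa> X. \<phi> |` Y = \<psi>}. ?x \<phi>) = ?x \<psi>"
    if "X \<subseteq> A" "card X \<le> D" "Y \<subseteq> X" "\<psi> \<in> \<kappa> Y" for X Y \<psi>
  proof -
    have \<phi>: "dom \<phi> \<subseteq> A" "ran \<phi> \<subseteq> T" if "\<phi> \<in> \<kappa> X" for \<phi>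
      using kappa_R_dom_ran[OF that] \<open>X \<subseteq> A\<close> by auto
    have "?x \<psi> = h (\<Sum>\<phi>\<in>{\<phi>\<in>\<kappa> X. \<phi> |` Y = \<psi>}. to_int_poly (R (m_map \<phi>)))"
      unfolding R_m_map_eq_sum_kappa_R[OF that]
      using \<phi> int_coeffs_R_m_map[OF assms(2)] by (subst to_int_poly_sum[OF assms(1)]) auto
    also have "\<dots> = (\<Sum>\<phi>\<in>{\<phi>\<in>\<kappa> X. \<phi> |` Y = \<psi>}. ?x \<phi>)"
      using \<phi> to_int_poly_in_polys_in[OF R_m_map_in_polys_in]
      by (intro Z_linear_on_sum[OF assms(3)]) auto
    finally show ?thesis ..
  qed
  have "(\<Sum>\<phi>\<in>\<kappa> X. ?x \<phi>) = 1" if "X \<subseteq> A" "card X \<le> D" for X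
  proof -
    have "?x Map.empty = 1"
      using assms(1,4) by (simp add: m_map_def R_one to_int_poly_one)
    then show ?thesis
      using restr[of X "{}" Map.empty] that empty_in_kappa_R by simp
  qed
  then show ?thesis
    unfolding L_solution_def using restr assms(5) by auto
qed

lemma Zaffine_accepts_if_integral:
  assumes "CHAR('f) = 0" "integral_op (A \<times> T) R" "k \<le> D"
  shows "Zaffine_accepts sig A RA T RT k"
  unfolding Zaffine_accepts_def
proof (intro exI conjI)
  show "k_consistent sig A RA T RT k \<kappa>"
    using assms(3) by (rule k_consistent_kappa_R)
  show "\<forall>X. X \<subseteq> A \<and> card X \<le> k \<longrightarrow> \<kappa> X \<noteq> {}"
    using assms(3) kappa_R_nonempty by auto
  show "L_solution sig A RA T RT k \<kappa> (\<lambda>X \<phi>. Poly_Mapping.lookup (to_int_poly (R (m_map \<phi>))) 0)"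
    using L_solution_kappa_R[OF assms(1,2) Z_linear_on_lookup_0 lookup_one_zero assms(3)] .
qed

end

theorem mainTheorem4:
  fixes sig :: "'s set" and ar :: "'s \<Rightarrow> nat"
    and A :: "'a set" and RA :: "'s \<Rightarrow> 'a list set"
    and T :: "'t set" and RT :: "'s \<Rightarrow> 't list set"
    and D :: nat
    and R :: "('a \<times> 't, 'f::field) mpoly \<Rightarrow> ('a \<times> 't, 'f) mpoly"
  assumes T_struct: "is_structure sig ar T RT"
    and A_inst: "is_instance sig ar A RA"
    and D_pos: "D \<ge> 1"
    and R_pr: "pseudo_reduction D (A \<times> T) (P_enc sig ar A RA T RT) R"
  shows "(\<forall>k\<le>D. k_consistent sig A RA T RT k (kappa_R sig A RA T RT R) \<and>
                (\<forall>X. X \<subseteq> A \<and> card X \<le> k \<longrightarrow> kappa_R sig A RA T RT R X \<noteq> {}))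
       \<and> (CHAR('f) = 0 \<and> integral_op (A \<times> T) R \<longrightarrow>
            (\<forall>h. Z_linear_on (A \<times> T) h \<and> h 1 = 1 \<longrightarrow>
               (\<forall>k\<le>D. L_solution sig A RA T RT k (kappa_R sig A RA T RT R)
                         (\<lambda>X \<phi>. h (to_int_poly (R (m_map \<phi>)))))))
       \<and> (CHAR('f) = 0 \<and>
            (\<exists>R'::('a \<times> 't, 'f) mpoly \<Rightarrow> ('a \<times> 't, 'f) mpoly.
                pseudo_reduction D (A \<times> T) (P_enc sig ar A RA T RT) R' \<and> integral_op (A \<times> T) R')
            \<longrightarrow> (\<forall>k\<le>D. Zaffine_accepts sig A RA T RT k))"
proof -
  interpret csp_pseudo_reduction sig ar A RA T RT D R
    using T_struct A_inst R_pr by unfold_locales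
  show ?thesis
  proof (intro conjI allI impI)
    show "k_consistent sig A RA T RT k \<kappa>" if "k \<le> D" for k
      using that by (rule k_consistent_kappa_R)
    show "\<kappa> X \<noteq> {}" if "k \<le> D" "X \<subseteq> A \<and> card X \<le> k" for k X
      using that by (intro kappa_R_nonempty) auto
    show "L_solution sig A RA T RT k \<kappa> (\<lambda>X \<phi>. h (to_int_poly (R (m_map \<phi>))))"
      if "CHAR('f) = 0 \<and> integral_op (A \<times> T) R" "Z_linear_on (A \<times> T) h \<and> h 1 = 1" "k \<le> D"
      for h k
      using that by (intro L_solution_kappa_R) auto
    show "Zaffine_accepts sig A RA T RT k"
      if "CHAR('f) = 0 \<and> (\<exists>R'::('a \<times> 't, 'f) mpoly \<Rightarrow> ('a \<times> 't, 'f) mpoly.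
          pseudo_reduction D (A \<times> T) (P_enc sig ar A RA T RT) R' \<and> integral_op (A \<times> T) R')"
        "k \<le> D" for k
      using that csp_pseudo_reduction.Zaffine_accepts_if_integral[OF csp_pseudo_reduction.intro]
        T_struct A_inst by blast
  qed
qed

end
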